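(* Let $\mathcal E\colon L^2(\mu)\to[0,\infty]$ be a proper lower semicontinuous convex functional (symmetric, $\mathcal E(0)=0$) such that $\mathcal E_e$ exists. (a) If $\mathcal E$ is a nonlinear order preserving form, then $D(\mathcal E_e)\cap L^2(\mu)=D(\mathcal E)$ and $M(\mathcal E_e)\cap L^2(\mu)=M(\mathcal E)$. (b) If $\mathcal E$ is a nonlinear order preserving form, then $\mathcal E_e$ satisfies the first Beurling–Deny criterion and $\||f|\|_{L_e}\le\|f\|_{L_e}$ for all $f\in M(\mathcal E_e)$. (c) If $\mathcal E$ is a nonlinear Dirichlet form, then $\mathcal E_e$ satisfies the second Beurling–Deny criterion and $\|Cf\|_{L_e}\le\|f\|_{L_e}$ for all $f\in M(\mathcal E_e)$ and all normal contractions $C\colon\mathbb R\to\mathbb R$.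
   Context: $(X,\mathfrak A,\mu)$ is $\sigma$-finite; $L^0(\mu)$ carries local convergence in measure. A normal contraction is a 1-Lipschitz $C\colon\mathbb R\to\mathbb R$ with $C(0)=0$; it operates on a functional $F$ on $L^p(\mu)$ ($p\in\{0,2\}$) if $F(f+Cg)+F(f-Cg)\le F(f+g)+F(f-g)$ for all $f,g\in L^p(\mu)$. First Beurling–Deny criterion: $x\mapsto|x|$ operates; second: all normal contractions operate. Nonlinear order preserving form: lower semicontinuous convex $\mathcal E$ satisfying the first criterion; nonlinear Dirichlet form: additionally the second. $M(\cdot)$ and Luxemburg seminorms: $M(F)=\{f:\lim_{\lambda\to0+}F(\lambda f)=0\}$, $\|f\|=\inf\{\lambda>0:F(\lambda^{-1}f)\le1\}$; $\|\cdot\|_{L_e}$ is the one of $\mathcal E_e$. $\mathcal E_e$ exists if $\mathcal E$ (extended by $+\infty$ to $L^0$) is lower semicontinuous on $D(\mathcal E)$ w.r.t. local convergence in measure; $\mathcal E_e$ is then its lower semicontinuous relaxation on $L^0(\mu)$. *)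

theory Defs
  imports "HOL-Analysis.Analysis"
begin

text \<open>Elements of L^0 and L^2 are represented by measurable real functions;
  functionals on L^2 are required to be invariant under a.e. equality.\<close>

definition L0 :: "'a measure \<Rightarrow> ('a \<Rightarrow> real) set" where
  "L0 M = borel_measurable M"

definition L2 :: "'a measure \<Rightarrow> ('a \<Rightarrow> real) set" where
  "L2 M = {f \<in> borel_measurable M. integrable M (\<lambda>x. (f x)^2)}"

definition loc_meas_conv :: "'a measure \<Rightarrow> (nat \<Rightarrow> 'a \<Rightarrow> real) \<Rightarrow> ('a \<Rightarrow> real) \<Rightarrow> bool" where
  "loc_meas_conv M fs f \<longleftrightarrow>
     (\<forall>A\<in>sets M. emeasure M A < \<infinity> \<longrightarrow>
       (\<forall>\<epsilon>>0. ((\<lambda>n. emeasure M (A \<inter> {x\<in>space M. \<epsilon> < \<bar>fs n x - f x\<bar>})) \<longlongrightarrow> 0) sequentially))"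

definition L2_conv :: "'a measure \<Rightarrow> (nat \<Rightarrow> 'a \<Rightarrow> real) \<Rightarrow> ('a \<Rightarrow> real) \<Rightarrow> bool" where
  "L2_conv M fs f \<longleftrightarrow> ((\<lambda>n. integral\<^sup>L M (\<lambda>x. (fs n x - f x)^2)) \<longlongrightarrow> 0) sequentially"

definition dom_fun :: "('a \<Rightarrow> real) set \<Rightarrow> (('a \<Rightarrow> real) \<Rightarrow> ennreal) \<Rightarrow> ('a \<Rightarrow> real) set" where
  "dom_fun S F = {f \<in> S. F f < \<infinity>}"

definition M_set :: "('a \<Rightarrow> real) set \<Rightarrow> (('a \<Rightarrow> real) \<Rightarrow> ennreal) \<Rightarrow> ('a \<Rightarrow> real) set" where
  "M_set S F = {f \<in> S. ((\<lambda>t. F (\<lambda>x. t * f x)) \<longlongrightarrow> 0) (at_right 0)}"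

definition lux :: "(('a \<Rightarrow> real) \<Rightarrow> ennreal) \<Rightarrow> ('a \<Rightarrow> real) \<Rightarrow> real" where
  "lux F f = Inf {r::real. 0 < r \<and> F (\<lambda>x. f x / r) \<le> 1}"

definition normal_contraction :: "(real \<Rightarrow> real) \<Rightarrow> bool" where
  "normal_contraction C \<longleftrightarrow> C 0 = 0 \<and> (\<forall>x y. \<bar>C x - C y\<bar> \<le> \<bar>x - y\<bar>)"

definition operates :: "('a \<Rightarrow> real) set \<Rightarrow> (real \<Rightarrow> real) \<Rightarrow> (('a \<Rightarrow> real) \<Rightarrow> ennreal) \<Rightarrow> bool" where
  "operates S C F \<longleftrightarrow> (\<forall>f\<in>S. \<forall>g\<in>S.
     F (\<lambda>x. f x + C (g x)) + F (\<lambda>x. f x - C (g x)) \<le> F (\<lambda>x. f x + g x) + F (\<lambda>x. f x - g x))"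

definition first_BD :: "('a \<Rightarrow> real) set \<Rightarrow> (('a \<Rightarrow> real) \<Rightarrow> ennreal) \<Rightarrow> bool" where
  "first_BD S F \<longleftrightarrow> operates S abs F"

definition second_BD :: "('a \<Rightarrow> real) set \<Rightarrow> (('a \<Rightarrow> real) \<Rightarrow> ennreal) \<Rightarrow> bool" where
  "second_BD S F \<longleftrightarrow> (\<forall>C. normal_contraction C \<longrightarrow> operates S C F)"

definition L2_functional :: "'a measure \<Rightarrow> (('a \<Rightarrow> real) \<Rightarrow> ennreal) \<Rightarrow> bool" where
  "L2_functional M E \<longleftrightarrow>
     (\<forall>f\<in>L2 M. \<forall>g\<in>L2 M. (AE x in M. f x = g x) \<longrightarrow> E f = E g) \<and>
     E (\<lambda>x. 0) = 0 \<and>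
     (\<exists>f\<in>L2 M. E f < \<infinity>) \<and>
     (\<forall>f\<in>L2 M. E (\<lambda>x. - f x) = E f) \<and>
     (\<forall>f\<in>L2 M. \<forall>g\<in>L2 M. \<forall>t::real. 0 \<le> t \<and> t \<le> 1 \<longrightarrow>
        E (\<lambda>x. t * f x + (1 - t) * g x) \<le> ennreal t * E f + ennreal (1 - t) * E g) \<and>
     (\<forall>fs f. (\<forall>n. fs n \<in> L2 M) \<and> f \<in> L2 M \<and> L2_conv M fs f \<longrightarrow>
        E f \<le> liminf (\<lambda>n. E (fs n)))"

definition ext_inf :: "'a measure \<Rightarrow> (('a \<Rightarrow> real) \<Rightarrow> ennreal) \<Rightarrow> ('a \<Rightarrow> real) \<Rightarrow> ennreal" where
  "ext_inf M E f = (if f \<in> L2 M then E f else \<infinity>)"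

definition Ee_exists :: "'a measure \<Rightarrow> (('a \<Rightarrow> real) \<Rightarrow> ennreal) \<Rightarrow> bool" where
  "Ee_exists M E \<longleftrightarrow>
     (\<forall>fs f. (\<forall>n. fs n \<in> dom_fun (L2 M) E) \<and> f \<in> dom_fun (L2 M) E \<and> loc_meas_conv M fs f \<longrightarrow>
        E f \<le> liminf (\<lambda>n. E (fs n)))"

text \<open>The lsc relaxation on L^0 w.r.t. local convergence in measure (this topology
  is (pseudo)metrizable for sigma-finite measures, so sequences suffice).\<close>
definition Ee :: "'a measure \<Rightarrow> (('a \<Rightarrow> real) \<Rightarrow> ennreal) \<Rightarrow> ('a \<Rightarrow> real) \<Rightarrow> ennreal" where
  "Ee M E f = (if f \<in> L0 M then
      Inf {liminf (\<lambda>n. ext_inf M E (fs n)) | fs. (\<forall>n. fs n \<in> L0 M) \<and> loc_meas_conv M fs f}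
    else \<infinity>)"

definition order_preserving_form :: "'a measure \<Rightarrow> (('a \<Rightarrow> real) \<Rightarrow> ennreal) \<Rightarrow> bool" where
  "order_preserving_form M E \<longleftrightarrow> L2_functional M E \<and> first_BD (L2 M) E"

definition dirichlet_form :: "'a measure \<Rightarrow> (('a \<Rightarrow> real) \<Rightarrow> ennreal) \<Rightarrow> bool" where
  "dirichlet_form M E \<longleftrightarrow> order_preserving_form M E \<and> second_BD (L2 M) E"

end

(* Normal contractions pass from E to its relaxation Ee.  If u_n -> f + g and v_n -> f - g
   locally in measure with convergent E-values, then (u_n + v_n)/2 + C((u_n - v_n)/2) and
   (u_n + v_n)/2 - C((u_n - v_n)/2) converge to f + C g and f - C g and satisfy the contraction
   inequality termwise, so the defining infimum of Ee inherits it.  With f = 0 and symmetry this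
   gives Ee (C o g) <= Ee g; applied to the rescaled contractions y |-> C (r y) / r it bounds the
   Luxemburg seminorm.

   On L^2 we always have Ee <= E, and the existence of Ee gives E <= Ee on D(E).  It remains to
   see that Ee f < oo forces E f < oo.  Take f_n -> f in measure with E f_n < B for infinitely
   many n.  By the lattice property behind the first Beurling-Deny criterion, the median of three
   such f_n has energy at most 5 B, and its distance to f is dominated by the pairwise minima
   min (|f_i - f|, |f_j - f|).  For fixed i these tend to 0 in L^2 as j -> oo, since f_i - f is
   square integrable and f_j - f -> 0 in measure.  Suitable medians therefore converge to f in L^2,
   and lower semicontinuity gives E f <= 5 B. *)

theory Submission
  imports Defs
begin

lemma ennreal_liminf_add_le:
  fixes f g :: "nat \<Rightarrow> ennreal"
  shows "liminf f + liminf g \<le> liminf (\<lambda>n. f n + g n)"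
proof -
  have "liminf f + liminf g = (SUP n. (INF m\<in>{n..}. f m) + (INF m\<in>{n..}. g m))"
    unfolding liminf_SUP_INF
    by (rule ennreal_SUP_add[symmetric]) (auto simp: incseq_def intro!: INF_superset_mono)
  also have "\<dots> \<le> (SUP n. INF m\<in>{n..}. f m + g m)"
    by (intro SUP_subset_mono INF_greatest add_mono) (auto intro: INF_lower)
  finally show ?thesis unfolding liminf_SUP_INF .
qed

lemma le_Inf_add_Inf_ennreal:
  fixes c :: ennreal
  assumes "\<And>x y. x \<in> A \<Longrightarrow> y \<in> B \<Longrightarrow> c \<le> x + y"
  shows "c \<le> Inf A + Inf B"
proof (cases "A = {} \<or> B = {}")
  case False
  have add_Inf: "x + Inf S = (INF y\<in>S. x + y)" if "S \<noteq> {}" for x :: ennreal and S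
    by (rule continuous_at_Inf_mono[OF _ _ that]) (auto intro: monoI add_mono continuous_add)
  have "Inf A + Inf B = (INF x\<in>A. x + Inf B)"
    using add_Inf[of A "Inf B"] False by (simp add: add.commute)
  also have "\<dots> = (INF x\<in>A. INF y\<in>B. x + y)"
    using add_Inf False by simp
  finally show ?thesis using assms by (auto intro!: INF_greatest)
qed auto

lemma ennreal_le_of_double_le: "(a::ennreal) + a \<le> b + b \<Longrightarrow> a \<le> b"
  by (meson add_strict_mono linorder_not_less)

lemma frequently_less_if_Liminf_less:
  fixes X :: "_ \<Rightarrow> _ :: complete_linorder"
  assumes "Liminf F X < B"
  shows "frequently (\<lambda>x. X x < B) F"
proof (rule ccontr)
  assume "\<not> frequently (\<lambda>x. X x < B) F"
  then have "eventually (\<lambda>x. B \<le> X x) F"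
    unfolding not_frequently by (rule eventually_mono) (simp add: not_less)
  then have "B \<le> Liminf F X" by (rule Liminf_bounded)
  with assms show False by simp
qed

section \<open>Square integrable functions and local convergence in measure\<close>

lemma L2_imp_L0: "f \<in> L2 M \<Longrightarrow> f \<in> L0 M"
  by (simp add: L2_def L0_def)

lemma L0_uminus_iff: "(\<lambda>x. - f x) \<in> L0 M \<longleftrightarrow> f \<in> L0 M"
  using borel_measurable_uminus[of "\<lambda>x. - f x" M] by (auto simp: L0_def)

lemma L2_uminus_iff: "(\<lambda>x. - f x) \<in> L2 M \<longleftrightarrow> f \<in> L2 M"
  using borel_measurable_uminus[of "\<lambda>x. - f x" M] by (auto simp: L2_def)

lemma L2_dominated:
  assumes h: "h \<in> borel_measurable M" and a: "a \<in> L2 M" and b: "b \<in> L2 M"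
    and le: "\<And>x. x \<in> space M \<Longrightarrow> \<bar>h x\<bar> \<le> \<bar>a x\<bar> + \<bar>b x\<bar>"
  shows "h \<in> L2 M"
proof -
  have int: "integrable M (\<lambda>x. 2 * (a x)\<^sup>2 + 2 * (b x)\<^sup>2)"
    using a b by (auto simp: L2_def)
  have bound: "(h x)\<^sup>2 \<le> 2 * (a x)\<^sup>2 + 2 * (b x)\<^sup>2" if "x \<in> space M" for x
  proof -
    have "\<bar>h x\<bar>\<^sup>2 \<le> (\<bar>a x\<bar> + \<bar>b x\<bar>)\<^sup>2"
      using le[OF that] by (intro power_mono) auto
    also have "\<dots> \<le> 2 * (a x)\<^sup>2 + 2 * (b x)\<^sup>2"
      using sum_squares_ge_zero[of "\<bar>a x\<bar> - \<bar>b x\<bar>" 0]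
      by (simp add: power2_eq_square algebra_simps)
    finally show ?thesis by simp
  qed
  have "integrable M (\<lambda>x. (h x)\<^sup>2)"
  proof (rule Bochner_Integration.integrable_bound[OF int])
    show "(\<lambda>x. (h x)\<^sup>2) \<in> borel_measurable M" using h by measurable
    show "AE x in M. norm ((h x)\<^sup>2) \<le> norm (2 * (a x)\<^sup>2 + 2 * (b x)\<^sup>2)"
      using bound by (intro AE_I2) simp
  qed
  with h show ?thesis by (simp add: L2_def)
qed

lemma L2_diff: "f \<in> L2 M \<Longrightarrow> g \<in> L2 M \<Longrightarrow> (\<lambda>x. f x - g x) \<in> L2 M"
  by (rule L2_dominated[of _ _ f g]) (auto simp: L2_def abs_triangle_ineq4)

lemma L2_cmult: "f \<in> L2 M \<Longrightarrow> (\<lambda>x. t * f x) \<in> L2 M"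
  unfolding L2_def by (auto simp: power_mult_distrib)

lemma loc_meas_conv_const: "loc_meas_conv M (\<lambda>n. f) f"
  by (simp add: loc_meas_conv_def)

lemma loc_meas_conv_subseq:
  "strict_mono r \<Longrightarrow> loc_meas_conv M fs f \<Longrightarrow> loc_meas_conv M (fs \<circ> r) f"
  unfolding loc_meas_conv_def by (auto intro: LIMSEQ_subseq_LIMSEQ[unfolded comp_def, of _ _ r])

lemma loc_meas_conv_dominated:
  assumes [measurable]: "\<And>n. fs n \<in> borel_measurable M" "f \<in> borel_measurable M"
    "\<And>n. gs n \<in> borel_measurable M" "g \<in> borel_measurable M"
    and f: "loc_meas_conv M fs f" and g: "loc_meas_conv M gs g"
    and le: "\<And>n x. x \<in> space M \<Longrightarrow> \<bar>hs n x - h x\<bar> \<le> \<bar>fs n x - f x\<bar> + \<bar>gs n x - g x\<bar>"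
  shows "loc_meas_conv M hs h"
  unfolding loc_meas_conv_def
proof (intro ballI impI allI)
  fix A and e :: real assume A: "A \<in> sets M" "emeasure M A < \<infinity>" and e: "0 < e"
  define Sf where "Sf n = A \<inter> {x\<in>space M. e/2 < \<bar>fs n x - f x\<bar>}" for n
  define Sg where "Sg n = A \<inter> {x\<in>space M. e/2 < \<bar>gs n x - g x\<bar>}" for n
  have [measurable]: "Sf n \<in> sets M" "Sg n \<in> sets M" for n
    unfolding Sf_def Sg_def using A by measurable
  have "0 < e/2" using e by simp
  with f g A have "(\<lambda>n. emeasure M (Sf n) + emeasure M (Sg n)) \<longlonglongrightarrow> 0 + 0"
    unfolding loc_meas_conv_def Sf_def Sg_def by (intro tendsto_add) blast+
  then have lim: "(\<lambda>n. emeasure M (Sf n) + emeasure M (Sg n)) \<longlonglongrightarrow> 0" by simp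
  have bound: "emeasure M (A \<inter> {x\<in>space M. e < \<bar>hs n x - h x\<bar>}) \<le> emeasure M (Sf n) + emeasure M (Sg n)" for n
  proof -
    have "A \<inter> {x\<in>space M. e < \<bar>hs n x - h x\<bar>} \<subseteq> Sf n \<union> Sg n"
    proof
      fix x assume "x \<in> A \<inter> {x\<in>space M. e < \<bar>hs n x - h x\<bar>}"
      with le[of x n] show "x \<in> Sf n \<union> Sg n" by (auto simp: Sf_def Sg_def)
    qed
    then have "emeasure M (A \<inter> {x\<in>space M. e < \<bar>hs n x - h x\<bar>}) \<le> emeasure M (Sf n \<union> Sg n)"
      by (intro emeasure_mono) auto
    also have "\<dots> \<le> emeasure M (Sf n) + emeasure M (Sg n)"
      by (rule emeasure_subadditive) auto
    finally show ?thesis .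
  qed
  show "(\<lambda>n. emeasure M (A \<inter> {x\<in>space M. e < \<bar>hs n x - h x\<bar>})) \<longlonglongrightarrow> 0"
    by (rule tendsto_sandwich[OF _ _ tendsto_const lim]) (use bound in auto)
qed

lemma Ee_le_liminf:
  "h \<in> L0 M \<Longrightarrow> (\<And>n. fs n \<in> L0 M) \<Longrightarrow> loc_meas_conv M fs h \<Longrightarrow> Ee M E h \<le> liminf (\<lambda>n. ext_inf M E (fs n))"
  unfolding Ee_def by (auto intro!: Inf_lower)

lemma Ee_greatest:
  assumes "h \<in> L0 M"
    and "\<And>fs. (\<forall>n. fs n \<in> L0 M) \<Longrightarrow> loc_meas_conv M fs h \<Longrightarrow> c \<le> liminf (\<lambda>n. ext_inf M E (fs n))"
  shows "c \<le> Ee M E h"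
  unfolding Ee_def using assms by (auto intro!: Inf_greatest)

lemma Ee_le_E: "h \<in> L2 M \<Longrightarrow> Ee M E h \<le> E h"
  using Ee_le_liminf[of h M "\<lambda>n. h" E] loc_meas_conv_const[of M h]
  by (auto simp: L2_imp_L0 ext_inf_def Liminf_const)

lemma loc_meas_conv_subseq_tendsto_liminf:
  assumes "\<And>n. fs n \<in> L0 M" "loc_meas_conv M fs h"
  obtains gs where "\<And>n. gs n \<in> L0 M" "loc_meas_conv M gs h"
    "(\<lambda>n. ext_inf M E (gs n)) \<longlonglongrightarrow> liminf (\<lambda>n. ext_inf M E (fs n))"
proof -
  obtain r where "strict_mono r"
    "((\<lambda>n. ext_inf M E (fs n)) \<circ> r) \<longlonglongrightarrow> liminf (\<lambda>n. ext_inf M E (fs n))"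
    using liminf_subseq_lim by blast
  with assms loc_meas_conv_subseq show ?thesis
    by (intro that[of "fs \<circ> r"]) (auto simp: comp_def)
qed

lemma ext_inf_uminus:
  assumes "L2_functional M E"
  shows "ext_inf M E (\<lambda>x. - f x) = ext_inf M E f"
  using assms L2_uminus_iff[of f M] unfolding L2_functional_def ext_inf_def by presburger

lemma Ee_uminus:
  assumes "L2_functional M E"
  shows "Ee M E (\<lambda>x. - h x) = Ee M E h"
proof -
  have "Ee M E (\<lambda>x. - h x) \<le> Ee M E h" for h
  proof (cases "h \<in> L0 M")
    case True
    show ?thesis
    proof (rule Ee_greatest[OF True])
      fix fs assume fs: "\<forall>n. fs n \<in> L0 M" "loc_meas_conv M fs h"
      then have "loc_meas_conv M (\<lambda>n x. - fs n x) (\<lambda>x. - h x)"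
        by (simp add: loc_meas_conv_def abs_minus_commute)
      with fs True have "Ee M E (\<lambda>x. - h x) \<le> liminf (\<lambda>n. ext_inf M E (\<lambda>x. - fs n x))"
        by (intro Ee_le_liminf) (auto simp: L0_uminus_iff)
      then show "Ee M E (\<lambda>x. - h x) \<le> liminf (\<lambda>n. ext_inf M E (fs n))"
        by (simp add: ext_inf_uminus[OF assms])
    qed
  qed (simp add: Ee_def L0_uminus_iff)
  from this[of h] this[of "\<lambda>x. - h x"] show ?thesis by simp
qed

section \<open>Normal contractions operate on the relaxation\<close>

lemma normal_contraction_abs: "normal_contraction abs"
  unfolding normal_contraction_def by (simp add: abs_triangle_ineq3)

lemma normal_contraction_abs_le: "normal_contraction C \<Longrightarrow> \<bar>C x\<bar> \<le> \<bar>x\<bar>"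
  unfolding normal_contraction_def by (metis diff_zero)

lemma normal_contraction_borel:
  assumes "normal_contraction C"
  shows "C \<in> borel_measurable borel"
proof -
  have "1-lipschitz_on UNIV C"
    using assms unfolding normal_contraction_def lipschitz_on_def dist_real_def by auto
  then show ?thesis by (intro borel_measurable_continuous_onI lipschitz_on_continuous_on)
qed

lemma normal_contraction_rescale:
  assumes C: "normal_contraction C" and r: "r > 0"
  shows "normal_contraction (\<lambda>y. C (r * y) / r)"
  unfolding normal_contraction_def
proof (intro conjI allI)
  show "C (r * 0) / r = 0" using C by (simp add: normal_contraction_def)
  fix x y
  have "\<bar>C (r * x) - C (r * y)\<bar> \<le> r * \<bar>x - y\<bar>"
    using C r unfolding normal_contraction_def by (metis abs_mult abs_of_pos right_diff_distrib)
  then show "\<bar>C (r * x) / r - C (r * y) / r\<bar> \<le> \<bar>x - y\<bar>"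
    using r by (simp add: diff_divide_distrib[symmetric] abs_divide pos_divide_le_eq mult.commute)
qed

lemma normal_contraction_pair_abs_le:
  assumes C: "normal_contraction C" and s: "\<bar>s\<bar> \<le> 1"
  shows "\<bar>(u + v) / 2 + s * C ((u - v) / 2)\<bar> \<le> \<bar>u\<bar> + \<bar>v\<bar>"
proof -
  have "\<bar>s * C ((u - v) / 2)\<bar> \<le> 1 * \<bar>(u - v) / 2\<bar>"
    unfolding abs_mult using s normal_contraction_abs_le[OF C, of "(u - v) / 2"] by (intro mult_mono) auto
  then show ?thesis by argo
qed

lemma normal_contraction_pair_dist:
  assumes C: "normal_contraction C" and s: "\<bar>s\<bar> \<le> 1"
  shows "\<bar>((u + v) / 2 + s * C ((u - v) / 2)) - (f + s * C g)\<bar> \<le> \<bar>u - (f + g)\<bar> + \<bar>v - (f - g)\<bar>"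
proof -
  have "\<bar>s * (C ((u - v) / 2) - C g)\<bar> \<le> 1 * \<bar>(u - v) / 2 - g\<bar>"
    unfolding abs_mult using C s by (intro mult_mono) (auto simp: normal_contraction_def)
  moreover have "\<bar>(u + v) / 2 + a - (f + b)\<bar> \<le> \<bar>u - (f + g)\<bar> + \<bar>v - (f - g)\<bar>"
    if "\<bar>a - b\<bar> \<le> \<bar>(u - v) / 2 - g\<bar>" for a b :: real
    using that by argo
  ultimately show ?thesis by (simp add: right_diff_distrib)
qed

lemma operates_L2_pair:
  assumes op: "operates (L2 M) C E" and u: "u \<in> L2 M" and v: "v \<in> L2 M"
  shows "E (\<lambda>x. (u x + v x) / 2 + C ((u x - v x) / 2)) + E (\<lambda>x. (u x + v x) / 2 - C ((u x - v x) / 2))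
    \<le> E u + E v"
proof -
  have "(\<lambda>x. (u x + v x) / 2) \<in> L2 M" "(\<lambda>x. (u x - v x) / 2) \<in> L2 M"
    using u v by (intro L2_dominated[OF _ u v]; force simp: L2_def)+
  from op[unfolded operates_def, rule_format, OF this] show ?thesis
    by (simp add: add_divide_distrib diff_divide_distrib)
qed

lemma ext_inf_pair:
  assumes C: "normal_contraction C" and op: "operates (L2 M) C E"
    and [measurable]: "u \<in> borel_measurable M" "v \<in> borel_measurable M"
  shows "ext_inf M E (\<lambda>x. (u x + v x) / 2 + C ((u x - v x) / 2))
      + ext_inf M E (\<lambda>x. (u x + v x) / 2 - C ((u x - v x) / 2))
    \<le> ext_inf M E u + ext_inf M E v"
proof (cases "u \<in> L2 M \<and> v \<in> L2 M")
  case True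
  have [measurable]: "C \<in> borel_measurable borel" by (rule normal_contraction_borel[OF C])
  have "(\<lambda>x. (u x + v x) / 2 + s * C ((u x - v x) / 2)) \<in> L2 M" if "\<bar>s\<bar> \<le> 1" for s
  proof (rule L2_dominated[of _ _ u v])
    show "(\<lambda>x. (u x + v x) / 2 + s * C ((u x - v x) / 2)) \<in> borel_measurable M" by measurable
  qed (use True normal_contraction_pair_abs_le[OF C that] in auto)
  from this[of 1] this[of "-1"] True operates_L2_pair[OF op] show ?thesis
    by (simp add: ext_inf_def)
qed (auto simp: ext_inf_def)

lemma Ee_operates_on_limits:
  assumes C: "normal_contraction C" and op: "operates (L2 M) C E"
    and f: "f \<in> L0 M" and g: "g \<in> L0 M"
    and us: "\<And>n. us n \<in> L0 M" "loc_meas_conv M us (\<lambda>x. f x + g x)" "(\<lambda>n. ext_inf M E (us n)) \<longlonglongrightarrow> a"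
    and vs: "\<And>n. vs n \<in> L0 M" "loc_meas_conv M vs (\<lambda>x. f x - g x)" "(\<lambda>n. ext_inf M E (vs n)) \<longlonglongrightarrow> b"
  shows "Ee M E (\<lambda>x. f x + C (g x)) + Ee M E (\<lambda>x. f x - C (g x)) \<le> a + b"
proof -
  have [measurable]: "C \<in> borel_measurable borel" "f \<in> borel_measurable M" "g \<in> borel_measurable M"
    "us n \<in> borel_measurable M" "vs n \<in> borel_measurable M" for n
    using normal_contraction_borel[OF C] f g us vs by (auto simp: L0_def)
  define p where "p n x = (us n x + vs n x) / 2 + C ((us n x - vs n x) / 2)" for n x
  define q where "q n x = (us n x + vs n x) / 2 - C ((us n x - vs n x) / 2)" for n x
  have pq: "p n \<in> L0 M" "q n \<in> L0 M" for n
    unfolding L0_def p_def q_def by measurable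
  have "loc_meas_conv M p (\<lambda>x. f x + C (g x))"
    using normal_contraction_pair_dist[OF C, of 1] unfolding p_def
    by (intro loc_meas_conv_dominated[OF _ _ _ _ us(2) vs(2)]) auto
  then have "Ee M E (\<lambda>x. f x + C (g x)) \<le> liminf (\<lambda>n. ext_inf M E (p n))"
    using f g pq by (intro Ee_le_liminf) (auto simp: L0_def)
  moreover have "loc_meas_conv M q (\<lambda>x. f x - C (g x))"
    using normal_contraction_pair_dist[OF C, of "-1"] unfolding q_def
    by (intro loc_meas_conv_dominated[OF _ _ _ _ us(2) vs(2)]) auto
  then have "Ee M E (\<lambda>x. f x - C (g x)) \<le> liminf (\<lambda>n. ext_inf M E (q n))"
    using f g pq by (intro Ee_le_liminf) (auto simp: L0_def)
  ultimately have "Ee M E (\<lambda>x. f x + C (g x)) + Ee M E (\<lambda>x. f x - C (g x))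
      \<le> liminf (\<lambda>n. ext_inf M E (p n)) + liminf (\<lambda>n. ext_inf M E (q n))"
    by (rule add_mono)
  also have "\<dots> \<le> liminf (\<lambda>n. ext_inf M E (p n) + ext_inf M E (q n))"
    by (rule ennreal_liminf_add_le)
  also have "\<dots> \<le> liminf (\<lambda>n. ext_inf M E (us n) + ext_inf M E (vs n))"
    unfolding p_def q_def by (intro Liminf_mono always_eventually allI ext_inf_pair[OF C op]) auto
  also have "\<dots> = a + b"
    by (intro lim_imp_Liminf tendsto_add us(3) vs(3)) simp
  finally show ?thesis .
qed

lemma operates_Ee:
  assumes C: "normal_contraction C" and op: "operates (L2 M) C E"
  shows "operates (L0 M) C (Ee M E)"
  unfolding operates_def
proof (intro ballI)
  fix f g assume f: "f \<in> L0 M" and g: "g \<in> L0 M"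
  let ?S = "\<lambda>h. {liminf (\<lambda>n. ext_inf M E (fs n)) | fs. (\<forall>n. fs n \<in> L0 M) \<and> loc_meas_conv M fs h}"
  have "Ee M E (\<lambda>x. f x + C (g x)) + Ee M E (\<lambda>x. f x - C (g x))
      \<le> Inf (?S (\<lambda>x. f x + g x)) + Inf (?S (\<lambda>x. f x - g x))"
  proof (rule le_Inf_add_Inf_ennreal)
    fix a b assume "a \<in> ?S (\<lambda>x. f x + g x)" "b \<in> ?S (\<lambda>x. f x - g x)"
    then obtain us vs where us: "\<forall>n. us n \<in> L0 M" "loc_meas_conv M us (\<lambda>x. f x + g x)"
        "a = liminf (\<lambda>n. ext_inf M E (us n))"
      and vs: "\<forall>n. vs n \<in> L0 M" "loc_meas_conv M vs (\<lambda>x. f x - g x)"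
        "b = liminf (\<lambda>n. ext_inf M E (vs n))"
      by blast
    obtain us' where "\<And>n. us' n \<in> L0 M" "loc_meas_conv M us' (\<lambda>x. f x + g x)"
      "(\<lambda>n. ext_inf M E (us' n)) \<longlonglongrightarrow> a"
      unfolding us(3) by (rule loc_meas_conv_subseq_tendsto_liminf) (use us in auto)
    moreover obtain vs' where "\<And>n. vs' n \<in> L0 M" "loc_meas_conv M vs' (\<lambda>x. f x - g x)"
      "(\<lambda>n. ext_inf M E (vs' n)) \<longlonglongrightarrow> b"
      unfolding vs(3) by (rule loc_meas_conv_subseq_tendsto_liminf) (use vs in auto)
    ultimately show "Ee M E (\<lambda>x. f x + C (g x)) + Ee M E (\<lambda>x. f x - C (g x)) \<le> a + b"
      by (rule Ee_operates_on_limits[OF C op f g])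
  qed
  also have "\<dots> = Ee M E (\<lambda>x. f x + g x) + Ee M E (\<lambda>x. f x - g x)"
    using f g by (simp add: Ee_def L0_def)
  finally show "Ee M E (\<lambda>x. f x + C (g x)) + Ee M E (\<lambda>x. f x - C (g x))
      \<le> Ee M E (\<lambda>x. f x + g x) + Ee M E (\<lambda>x. f x - g x)" .
qed

lemma operates_comp_le:
  assumes op: "operates S C F" and "(\<lambda>x. 0) \<in> S" "g \<in> S"
    and sym: "\<And>h. F (\<lambda>x. - h x) = F h"
  shows "F (\<lambda>x. C (g x)) \<le> F g"
proof -
  have "F (\<lambda>x. C (g x)) + F (\<lambda>x. - C (g x)) \<le> F g + F (\<lambda>x. - g x)"
    using op[unfolded operates_def, rule_format, OF assms(2,3)] by simp
  then show ?thesis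
    unfolding sym[of g] sym[of "\<lambda>x. C (g x)"] by (rule ennreal_le_of_double_le)
qed

lemma M_set_lux_set_nonempty:
  assumes "f \<in> M_set S F"
  shows "{r. 0 < r \<and> F (\<lambda>x. f x / r) \<le> 1} \<noteq> {}"
proof -
  have "((\<lambda>t. F (\<lambda>x. t * f x)) \<longlongrightarrow> 0) (at_right 0)"
    using assms by (simp add: M_set_def)
  then have "eventually (\<lambda>t. F (\<lambda>x. t * f x) < 1) (at_right (0::real))"
    by (rule order_tendstoD(2)) simp
  then obtain b where "0 < b" "\<And>t. 0 < t \<Longrightarrow> t < b \<Longrightarrow> F (\<lambda>x. t * f x) < 1"
    unfolding eventually_at_right_field by auto
  then obtain t where "0 < t" "F (\<lambda>x. t * f x) < 1"
    using field_lbound_gt_zero[of b b] by blast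
  then show ?thesis
    by (intro ex_in_conv[THEN iffD1] exI[of _ "1 / t"]) (simp add: divide_inverse mult.commute)
qed

lemma lux_le_lux:
  assumes f: "f \<in> M_set S F" and le: "\<And>r. r > 0 \<Longrightarrow> F (\<lambda>x. h x / r) \<le> F (\<lambda>x. f x / r)"
  shows "lux F h \<le> lux F f"
  unfolding lux_def
proof (rule cInf_superset_mono)
  show "{r. 0 < r \<and> F (\<lambda>x. f x / r) \<le> 1} \<noteq> {}" by (rule M_set_lux_set_nonempty[OF f])
  show "bdd_below {r. 0 < r \<and> F (\<lambda>x. h x / r) \<le> 1}" by (rule bdd_belowI[of _ 0]) auto
  show "{r. 0 < r \<and> F (\<lambda>x. f x / r) \<le> 1} \<subseteq> {r. 0 < r \<and> F (\<lambda>x. h x / r) \<le> 1}"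
    using le order_trans by blast
qed

lemma lux_Ee_comp_le:
  assumes Lf: "L2_functional M E"
    and op: "\<And>r. r > 0 \<Longrightarrow> operates (L0 M) (\<lambda>y. C (r * y) / r) (Ee M E)"
    and f: "f \<in> M_set (L0 M) (Ee M E)"
  shows "lux (Ee M E) (\<lambda>x. C (f x)) \<le> lux (Ee M E) f"
proof (rule lux_le_lux[OF f])
  fix r :: real assume r: "r > 0"
  have "(\<lambda>x. f x / r) \<in> L0 M" "(\<lambda>x. 0) \<in> L0 M"
    using f by (auto simp: M_set_def L0_def)
  from operates_comp_le[OF op[OF r] this(2,1) Ee_uminus[OF Lf]] r
  show "Ee M E (\<lambda>x. C (f x) / r) \<le> Ee M E (\<lambda>x. f x / r)" by simp
qed

section \<open>Medians and the lattice property\<close>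

definition med3 :: "real \<Rightarrow> real \<Rightarrow> real \<Rightarrow> real" where
  "med3 x y z = max (min x y) (min (max x y) z)"

lemma med3_diff: "med3 x y z - c = med3 (x - c) (y - c) (z - c)"
  by (simp add: med3_def max_diff_distrib_left min_diff_distrib_left)

lemma med3_sq_le: "(med3 x y z)\<^sup>2 \<le> (min \<bar>x\<bar> \<bar>y\<bar>)\<^sup>2 + (min \<bar>x\<bar> \<bar>z\<bar>)\<^sup>2 + (min \<bar>y\<bar> \<bar>z\<bar>)\<^sup>2"
proof -
  \<comment> \<open>if med3 x y z \<ge> 0, two of x, y, z are \<ge> med3 x y z; symmetrically if it is negative\<close>
  have disj: "\<bar>med3 x y z\<bar> \<le> min \<bar>x\<bar> \<bar>y\<bar> \<or> \<bar>med3 x y z\<bar> \<le> min \<bar>x\<bar> \<bar>z\<bar> \<or> \<bar>med3 x y z\<bar> \<le> min \<bar>y\<bar> \<bar>z\<bar>"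
    by (auto simp: med3_def min_def max_def abs_if)
  have sq: "\<bar>med3 x y z\<bar> \<le> t \<Longrightarrow> (med3 x y z)\<^sup>2 \<le> t\<^sup>2" for t
    by (metis abs_le_square_iff abs_of_nonneg abs_ge_zero order_trans)
  show ?thesis
    using disj sq[of "min \<bar>x\<bar> \<bar>y\<bar>"] sq[of "min \<bar>x\<bar> \<bar>z\<bar>"] sq[of "min \<bar>y\<bar> \<bar>z\<bar>"]
      zero_le_power2[of "min \<bar>x\<bar> \<bar>y\<bar>"] zero_le_power2[of "min \<bar>x\<bar> \<bar>z\<bar>"]
      zero_le_power2[of "min \<bar>y\<bar> \<bar>z\<bar>"] by argo
qed

lemma L2_max: "u \<in> L2 M \<Longrightarrow> v \<in> L2 M \<Longrightarrow> (\<lambda>x. max (u x) (v x)) \<in> L2 M"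
  and L2_min: "u \<in> L2 M \<Longrightarrow> v \<in> L2 M \<Longrightarrow> (\<lambda>x. min (u x) (v x)) \<in> L2 M"
  by (rule L2_dominated[of _ _ u v]; force simp: L2_def)+

lemma first_BD_max_min:
  assumes "first_BD (L2 M) E" "u \<in> L2 M" "v \<in> L2 M"
  shows "E (\<lambda>x. max (u x) (v x)) + E (\<lambda>x. min (u x) (v x)) \<le> E u + E v"
proof -
  have "(a + b) / 2 + \<bar>(a - b) / 2\<bar> = max a b" "(a + b) / 2 - \<bar>(a - b) / 2\<bar> = min a b" for a b :: real
    by (auto simp: max_def min_def abs_if field_simps)
  with operates_L2_pair[of M abs E u v] assms show ?thesis
    by (simp add: first_BD_def)
qed

lemma first_BD_max_le:
  "first_BD (L2 M) E \<Longrightarrow> u \<in> L2 M \<Longrightarrow> v \<in> L2 M \<Longrightarrow> E (\<lambda>x. max (u x) (v x)) \<le> E u + E v"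
  and first_BD_min_le:
  "first_BD (L2 M) E \<Longrightarrow> u \<in> L2 M \<Longrightarrow> v \<in> L2 M \<Longrightarrow> E (\<lambda>x. min (u x) (v x)) \<le> E u + E v"
  by (drule (2) first_BD_max_min; auto intro: order_trans[rotated] add_increasing add_increasing2)+

lemma L2_med3:
  "u \<in> L2 M \<Longrightarrow> v \<in> L2 M \<Longrightarrow> w \<in> L2 M \<Longrightarrow> (\<lambda>x. med3 (u x) (v x) (w x)) \<in> L2 M"
  unfolding med3_def by (intro L2_max L2_min)

lemma first_BD_med3_le:
  assumes BD: "first_BD (L2 M) E" and u: "u \<in> L2 M" and v: "v \<in> L2 M" and w: "w \<in> L2 M"
  shows "E (\<lambda>x. med3 (u x) (v x) (w x)) \<le> 2 * E u + 2 * E v + E w"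
proof -
  have "E (\<lambda>x. med3 (u x) (v x) (w x))
      \<le> E (\<lambda>x. min (u x) (v x)) + E (\<lambda>x. min (max (u x) (v x)) (w x))"
    unfolding med3_def using assms by (intro first_BD_max_le L2_max L2_min)
  also have "\<dots> \<le> (E u + E v) + (E (\<lambda>x. max (u x) (v x)) + E w)"
    using assms by (intro add_mono first_BD_min_le L2_max)
  also have "\<dots> \<le> (E u + E v) + ((E u + E v) + E w)"
    using assms by (intro add_mono first_BD_max_le order_refl)
  also have "\<dots> = 2 * E u + 2 * E v + E w"
    by (simp only: mult_2 add_ac)
  finally show ?thesis .
qed

section \<open>The relaxation agrees with E on its finite part in L2\<close>

lemma tendsto_nn_integral_sq_outside_annuli:
  assumes "g \<in> L2 M"
  shows "(\<lambda>k. \<integral>\<^sup>+x. ennreal (if 1 / real (Suc k) < \<bar>g x\<bar> \<and> \<bar>g x\<bar> \<le> real (Suc k) then 0 else (g x)\<^sup>2) \<partial>M)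
    \<longlonglongrightarrow> 0"
proof -
  have [measurable]: "g \<in> borel_measurable M" and "integrable M (\<lambda>x. (g x)\<^sup>2)"
    using assms by (auto simp: L2_def)
  then have fin: "(\<integral>\<^sup>+x. ennreal ((g x)\<^sup>2) \<partial>M) < \<infinity>"
    by (simp add: integrable_iff_bounded)
  have "eventually (\<lambda>k. (if 1 / real (Suc k) < \<bar>g x\<bar> \<and> \<bar>g x\<bar> \<le> real (Suc k) then 0 else (g x)\<^sup>2) = 0)
      sequentially" for x
  proof (cases "g x = 0")
    case False
    obtain N :: nat where "\<bar>g x\<bar> < real N" using reals_Archimedean2 by blast
    then have "eventually (\<lambda>k. \<bar>g x\<bar> \<le> real (Suc k)) sequentially"
      unfolding eventually_sequentially by (intro exI[of _ N]) auto
    moreover have "eventually (\<lambda>k. 1 / real (Suc k) < \<bar>g x\<bar>) sequentially"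
      using False LIMSEQ_inverse_real_of_nat by (intro order_tendstoD(2)) (auto simp: inverse_eq_divide)
    ultimately show ?thesis by eventually_elim simp
  qed simp
  then have "(\<lambda>k. \<integral>\<^sup>+x. ennreal (if 1 / real (Suc k) < \<bar>g x\<bar> \<and> \<bar>g x\<bar> \<le> real (Suc k) then 0 else (g x)\<^sup>2) \<partial>M)
      \<longlonglongrightarrow> (\<integral>\<^sup>+x. 0 \<partial>M)"
  proof (intro nn_integral_dominated_convergence[where w="\<lambda>x. ennreal ((g x)\<^sup>2)"] AE_I2)
    fix x
    assume "\<And>x. eventually (\<lambda>k. (if 1 / real (Suc k) < \<bar>g x\<bar> \<and> \<bar>g x\<bar> \<le> real (Suc k) then 0 else (g x)\<^sup>2) = 0)
      sequentially"
    then show "(\<lambda>k. ennreal (if 1 / real (Suc k) < \<bar>g x\<bar> \<and> \<bar>g x\<bar> \<le> real (Suc k) then 0 else (g x)\<^sup>2)) \<longlonglongrightarrow> 0"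
      by (intro tendsto_eventually) (auto elim: eventually_mono)
  qed (use fin in \<open>auto intro: ennreal_leI\<close>)
  then show ?thesis by simp
qed

lemma emeasure_abs_gt_less_top:
  assumes "g \<in> L2 M" "0 < \<eta>"
  shows "emeasure M {x\<in>space M. \<eta> < \<bar>g x\<bar>} < \<infinity>"
proof -
  have [measurable]: "g \<in> borel_measurable M" and "integrable M (\<lambda>x. (g x)\<^sup>2)"
    using assms by (auto simp: L2_def)
  then have fin: "(\<integral>\<^sup>+x. ennreal ((g x)\<^sup>2) \<partial>M) < \<infinity>"
    by (simp add: integrable_iff_bounded)
  have "emeasure M {x\<in>space M. \<eta> < \<bar>g x\<bar>} = (\<integral>\<^sup>+x. indicator {x\<in>space M. \<eta> < \<bar>g x\<bar>} x \<partial>M)"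
    by simp
  also have "\<dots> \<le> (\<integral>\<^sup>+x. ennreal ((g x)\<^sup>2 / \<eta>\<^sup>2) \<partial>M)"
  proof (intro nn_integral_mono)
    fix x
    have "\<eta> < \<bar>g x\<bar> \<Longrightarrow> \<eta>\<^sup>2 \<le> (g x)\<^sup>2"
      using assms(2) by (metis abs_le_square_iff abs_of_pos less_imp_le)
    then show "indicator {x\<in>space M. \<eta> < \<bar>g x\<bar>} x \<le> ennreal ((g x)\<^sup>2 / \<eta>\<^sup>2)"
      using assms(2) by (auto simp: indicator_def field_simps)
  qed
  also have "\<dots> = (\<integral>\<^sup>+x. ennreal ((g x)\<^sup>2) * ennreal (1 / \<eta>\<^sup>2) \<partial>M)"
    by (simp add: ennreal_mult[symmetric])
  also have "\<dots> = (\<integral>\<^sup>+x. ennreal ((g x)\<^sup>2) \<partial>M) * ennreal (1 / \<eta>\<^sup>2)"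
    by (rule nn_integral_multc) measurable
  also have "\<dots> < \<infinity>"
    using fin by (simp add: ennreal_mult_less_top)
  finally show ?thesis .
qed

lemma min_sq_le_split:
  fixes a b \<eta> N \<epsilon> :: real
  shows "(min \<bar>a\<bar> \<bar>b\<bar>)\<^sup>2 \<le> (if \<eta> < \<bar>a\<bar> \<and> \<bar>a\<bar> \<le> N then 0 else a\<^sup>2)
      + (if \<eta> < \<bar>a\<bar> then \<epsilon>\<^sup>2 else 0) + (if \<eta> < \<bar>a\<bar> \<and> \<epsilon> < \<bar>b\<bar> then N\<^sup>2 else 0)"
proof -
  have sq: "\<bar>x\<bar> \<le> y \<Longrightarrow> x\<^sup>2 \<le> y\<^sup>2" for x y :: real
    by (metis abs_le_square_iff abs_of_nonneg abs_ge_zero order_trans)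
  have "(min \<bar>a\<bar> \<bar>b\<bar>)\<^sup>2 \<le> a\<^sup>2" "(min \<bar>a\<bar> \<bar>b\<bar>)\<^sup>2 \<le> b\<^sup>2"
    using sq[of "min \<bar>a\<bar> \<bar>b\<bar>" "\<bar>a\<bar>"] sq[of "min \<bar>a\<bar> \<bar>b\<bar>" "\<bar>b\<bar>"] by simp_all
  moreover have "\<bar>b\<bar> \<le> \<epsilon> \<longrightarrow> b\<^sup>2 \<le> \<epsilon>\<^sup>2" "\<bar>a\<bar> \<le> N \<longrightarrow> a\<^sup>2 \<le> N\<^sup>2"
    using sq by blast+
  ultimately show ?thesis
    using zero_le_power2[of \<epsilon>] zero_le_power2[of N] zero_le_power2[of a] by argo
qed

lemma nn_integral_min_sq_le:
  assumes [measurable]: "g \<in> borel_measurable M" "h \<in> borel_measurable M"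
  shows "(\<integral>\<^sup>+x. ennreal ((min \<bar>g x\<bar> \<bar>h x\<bar>)\<^sup>2) \<partial>M)
    \<le> (\<integral>\<^sup>+x. ennreal (if \<eta> < \<bar>g x\<bar> \<and> \<bar>g x\<bar> \<le> N then 0 else (g x)\<^sup>2) \<partial>M)
      + ennreal (\<epsilon>\<^sup>2) * emeasure M {x\<in>space M. \<eta> < \<bar>g x\<bar>}
      + ennreal (N\<^sup>2) * emeasure M {x\<in>space M. \<eta> < \<bar>g x\<bar> \<and> \<epsilon> < \<bar>h x\<bar>}"
proof -
  let ?A = "{x\<in>space M. \<eta> < \<bar>g x\<bar>}" and ?S = "{x\<in>space M. \<eta> < \<bar>g x\<bar> \<and> \<epsilon> < \<bar>h x\<bar>}"
  have "(\<integral>\<^sup>+x. ennreal ((min \<bar>g x\<bar> \<bar>h x\<bar>)\<^sup>2) \<partial>M)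
    \<le> (\<integral>\<^sup>+x. ennreal (if \<eta> < \<bar>g x\<bar> \<and> \<bar>g x\<bar> \<le> N then 0 else (g x)\<^sup>2)
          + ennreal (\<epsilon>\<^sup>2) * indicator ?A x + ennreal (N\<^sup>2) * indicator ?S x \<partial>M)"
  proof (intro nn_integral_mono)
    fix x assume "x \<in> space M"
    then show "ennreal ((min \<bar>g x\<bar> \<bar>h x\<bar>)\<^sup>2)
      \<le> ennreal (if \<eta> < \<bar>g x\<bar> \<and> \<bar>g x\<bar> \<le> N then 0 else (g x)\<^sup>2)
        + ennreal (\<epsilon>\<^sup>2) * indicator ?A x + ennreal (N\<^sup>2) * indicator ?S x"
      using ennreal_leI[OF min_sq_le_split[of "g x" "h x" \<eta> N \<epsilon>]]
      by (cases "\<eta> < \<bar>g x\<bar>"; cases "\<epsilon> < \<bar>h x\<bar>") (simp_all add: ennreal_plus)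
  qed
  also have "\<dots> = (\<integral>\<^sup>+x. ennreal (if \<eta> < \<bar>g x\<bar> \<and> \<bar>g x\<bar> \<le> N then 0 else (g x)\<^sup>2)
          + ennreal (\<epsilon>\<^sup>2) * indicator ?A x \<partial>M) + (\<integral>\<^sup>+x. ennreal (N\<^sup>2) * indicator ?S x \<partial>M)"
    by (rule nn_integral_add) measurable
  also have "\<dots> = (\<integral>\<^sup>+x. ennreal (if \<eta> < \<bar>g x\<bar> \<and> \<bar>g x\<bar> \<le> N then 0 else (g x)\<^sup>2) \<partial>M)
      + (\<integral>\<^sup>+x. ennreal (\<epsilon>\<^sup>2) * indicator ?A x \<partial>M) + (\<integral>\<^sup>+x. ennreal (N\<^sup>2) * indicator ?S x \<partial>M)"
    by (subst nn_integral_add) measurable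
  also have "\<dots> = (\<integral>\<^sup>+x. ennreal (if \<eta> < \<bar>g x\<bar> \<and> \<bar>g x\<bar> \<le> N then 0 else (g x)\<^sup>2) \<partial>M)
      + ennreal (\<epsilon>\<^sup>2) * emeasure M ?A + ennreal (N\<^sup>2) * emeasure M ?S"
    by (subst (1 2) nn_integral_cmult_indicator) measurable
  finally show ?thesis .
qed

lemma exists_annulus_tail_less:
  assumes g: "g \<in> L2 M" and \<delta>: "0 < \<delta>"
  obtains \<eta> N \<epsilon> where "0 < N" "0 < \<epsilon>" "emeasure M {x\<in>space M. \<eta> < \<bar>g x\<bar>} < \<infinity>"
    "(\<integral>\<^sup>+x. ennreal (if \<eta> < \<bar>g x\<bar> \<and> \<bar>g x\<bar> \<le> N then 0 else (g x)\<^sup>2) \<partial>M)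
      + ennreal (\<epsilon>\<^sup>2) * emeasure M {x\<in>space M. \<eta> < \<bar>g x\<bar>} < ennreal \<delta>"
proof -
  have "eventually (\<lambda>k. (\<integral>\<^sup>+x. ennreal (if 1 / real (Suc k) < \<bar>g x\<bar> \<and> \<bar>g x\<bar> \<le> real (Suc k) then 0 else (g x)\<^sup>2) \<partial>M)
      < ennreal (\<delta> / 2)) sequentially"
    using \<delta> by (intro order_tendstoD(2)[OF tendsto_nn_integral_sq_outside_annuli[OF g]]) simp
  then obtain K where K: "(\<integral>\<^sup>+x. ennreal (if 1 / real (Suc K) < \<bar>g x\<bar> \<and> \<bar>g x\<bar> \<le> real (Suc K) then 0 else (g x)\<^sup>2) \<partial>M)
      < ennreal (\<delta> / 2)"
    unfolding eventually_sequentially by (meson order_refl)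
  let ?A = "{x\<in>space M. 1 / real (Suc K) < \<bar>g x\<bar>}"
  have fin: "emeasure M ?A < \<infinity>"
    by (rule emeasure_abs_gt_less_top[OF g]) simp
  then obtain m where m: "emeasure M ?A = ennreal m" "0 \<le> m"
    by (cases "emeasure M ?A" rule: ennreal_cases) auto
  define \<epsilon> where "\<epsilon> = sqrt (\<delta> / (2 * (m + 1)))"
  have \<epsilon>: "0 < \<epsilon>" using \<delta> m by (simp add: \<epsilon>_def)
  have "\<epsilon>\<^sup>2 * m < \<delta> / 2"
    using \<delta> m by (simp add: \<epsilon>_def field_simps)
  then have "ennreal (\<epsilon>\<^sup>2) * emeasure M ?A < ennreal (\<delta> / 2)"
    using m \<delta> by (simp add: ennreal_mult[symmetric] ennreal_less_iff)
  with K have "(\<integral>\<^sup>+x. ennreal (if 1 / real (Suc K) < \<bar>g x\<bar> \<and> \<bar>g x\<bar> \<le> real (Suc K) then 0 else (g x)\<^sup>2) \<partial>M)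
      + ennreal (\<epsilon>\<^sup>2) * emeasure M ?A < ennreal (\<delta> / 2) + ennreal (\<delta> / 2)"
    by (rule add_strict_mono)
  also have "\<dots> = ennreal \<delta>"
    using \<delta> by (simp add: ennreal_plus[symmetric] del: ennreal_plus)
  finally show ?thesis
    using \<epsilon> fin by (intro that[of "real (Suc K)"]) auto
qed

lemma eventually_nn_integral_min_sq_less:
  assumes g: "g \<in> L2 M" and [measurable]: "\<And>n. hs n \<in> borel_measurable M"
    and conv: "loc_meas_conv M hs (\<lambda>x. 0)" and \<delta>: "0 < \<delta>"
  shows "eventually (\<lambda>n. (\<integral>\<^sup>+x. ennreal ((min \<bar>g x\<bar> \<bar>hs n x\<bar>)\<^sup>2) \<partial>M) < ennreal \<delta>) sequentially"
proof -
  have [measurable]: "g \<in> borel_measurable M" using g by (simp add: L2_def)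
  obtain \<eta> N \<epsilon> where N: "0 < N" and \<epsilon>: "0 < \<epsilon>"
    and fin: "emeasure M {x\<in>space M. \<eta> < \<bar>g x\<bar>} < \<infinity>"
    and small: "(\<integral>\<^sup>+x. ennreal (if \<eta> < \<bar>g x\<bar> \<and> \<bar>g x\<bar> \<le> N then 0 else (g x)\<^sup>2) \<partial>M)
      + ennreal (\<epsilon>\<^sup>2) * emeasure M {x\<in>space M. \<eta> < \<bar>g x\<bar>} < ennreal (\<delta> / 2)"
    by (rule exists_annulus_tail_less[OF g, of "\<delta> / 2"]) (auto simp: \<delta>)
  have "(\<lambda>n. emeasure M ({x\<in>space M. \<eta> < \<bar>g x\<bar>} \<inter> {x\<in>space M. \<epsilon> < \<bar>hs n x - 0\<bar>})) \<longlonglongrightarrow> 0"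
    using conv \<epsilon> fin unfolding loc_meas_conv_def by (auto simp del: diff_0_right)
  moreover have "{x\<in>space M. \<eta> < \<bar>g x\<bar>} \<inter> {x\<in>space M. \<epsilon> < \<bar>hs n x - 0\<bar>}
      = {x\<in>space M. \<eta> < \<bar>g x\<bar> \<and> \<epsilon> < \<bar>hs n x\<bar>}" for n
    by auto
  ultimately have "eventually (\<lambda>n. emeasure M {x\<in>space M. \<eta> < \<bar>g x\<bar> \<and> \<epsilon> < \<bar>hs n x\<bar>}
      < ennreal (\<delta> / (2 * N\<^sup>2))) sequentially"
    using \<delta> N by (intro order_tendstoD(2)) auto
  then show ?thesis
  proof eventually_elim
    case (elim n)
    have "ennreal (N\<^sup>2) * emeasure M {x\<in>space M. \<eta> < \<bar>g x\<bar> \<and> \<epsilon> < \<bar>hs n x\<bar>}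
        < ennreal (N\<^sup>2) * ennreal (\<delta> / (2 * N\<^sup>2))"
      using elim N by (intro ennreal_mult_strict_left_mono) auto
    also have "\<dots> = ennreal (\<delta> / 2)"
      using \<delta> N by (simp add: ennreal_mult[symmetric])
    finally have S: "ennreal (N\<^sup>2) * emeasure M {x\<in>space M. \<eta> < \<bar>g x\<bar> \<and> \<epsilon> < \<bar>hs n x\<bar>}
      < ennreal (\<delta> / 2)" .
    have "(\<integral>\<^sup>+x. ennreal ((min \<bar>g x\<bar> \<bar>hs n x\<bar>)\<^sup>2) \<partial>M)
      \<le> (\<integral>\<^sup>+x. ennreal (if \<eta> < \<bar>g x\<bar> \<and> \<bar>g x\<bar> \<le> N then 0 else (g x)\<^sup>2) \<partial>M)
        + ennreal (\<epsilon>\<^sup>2) * emeasure M {x\<in>space M. \<eta> < \<bar>g x\<bar>}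
        + ennreal (N\<^sup>2) * emeasure M {x\<in>space M. \<eta> < \<bar>g x\<bar> \<and> \<epsilon> < \<bar>hs n x\<bar>}"
      by (rule nn_integral_min_sq_le) measurable
    also have "\<dots> < ennreal (\<delta> / 2) + ennreal (\<delta> / 2)"
      using small S by (rule add_strict_mono)
    also have "\<dots> = ennreal \<delta>"
      using \<delta> by (simp add: ennreal_plus[symmetric] del: ennreal_plus)
    finally show ?case .
  qed
qed

lemma exists_med3_nn_integral_less:
  assumes [measurable]: "\<And>n. hs n \<in> borel_measurable M" and conv: "loc_meas_conv M hs (\<lambda>x. 0)"
    and freq: "frequently P sequentially" and L2: "\<And>n. P n \<Longrightarrow> hs n \<in> L2 M" and \<delta>: "0 < \<delta>"
  shows "\<exists>a b c. P a \<and> P b \<and> P c \<and>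
    (\<integral>\<^sup>+x. ennreal ((med3 (hs a x) (hs b x) (hs c x))\<^sup>2) \<partial>M) < ennreal \<delta>"
proof -
  let ?I = "\<lambda>i j. \<integral>\<^sup>+x. ennreal ((min \<bar>hs i x\<bar> \<bar>hs j x\<bar>)\<^sup>2) \<partial>M"
  have ev: "eventually (\<lambda>n. ?I i n < ennreal (\<delta> / 3)) sequentially" if "P i" for i
    using \<delta> by (intro eventually_nn_integral_min_sq_less[OF L2[OF that] _ conv]) auto
  obtain a where a: "P a" using frequently_ex[OF freq] ..
  obtain b where b: "P b" "?I a b < ennreal (\<delta> / 3)"
    using frequently_ex[OF frequently_eventually_frequently[OF freq ev[OF a]]] by blast
  obtain c where c: "P c" "?I a c < ennreal (\<delta> / 3)" "?I b c < ennreal (\<delta> / 3)"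
    using frequently_ex[OF frequently_eventually_frequently[OF freq eventually_conj[OF ev[OF a] ev[OF b(1)]]]]
    by blast
  have "(\<integral>\<^sup>+x. ennreal ((med3 (hs a x) (hs b x) (hs c x))\<^sup>2) \<partial>M)
      \<le> (\<integral>\<^sup>+x. ennreal ((min \<bar>hs a x\<bar> \<bar>hs b x\<bar>)\<^sup>2) + ennreal ((min \<bar>hs a x\<bar> \<bar>hs c x\<bar>)\<^sup>2)
          + ennreal ((min \<bar>hs b x\<bar> \<bar>hs c x\<bar>)\<^sup>2) \<partial>M)"
    by (intro nn_integral_mono) (simp add: med3_sq_le ennreal_plus[symmetric] ennreal_leI del: ennreal_plus)
  also have "\<dots> = ?I a b + ?I a c + ?I b c"
    by (simp add: nn_integral_add)
  also have "\<dots> < ennreal (\<delta> / 3) + ennreal (\<delta> / 3) + ennreal (\<delta> / 3)"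
    using b c by (intro add_strict_mono)
  also have "\<dots> = ennreal \<delta>"
    using \<delta> by (simp add: ennreal_plus[symmetric] del: ennreal_plus)
  finally show ?thesis using a b c by blast
qed

lemma exists_med3_seq_tendsto_zero:
  assumes [measurable]: "\<And>n. hs n \<in> borel_measurable M" and conv: "loc_meas_conv M hs (\<lambda>x. 0)"
    and freq: "frequently P sequentially" and L2: "\<And>n. P n \<Longrightarrow> hs n \<in> L2 M"
  obtains a b c where "\<And>k. P (a k) \<and> P (b k) \<and> P (c k)"
    "(\<lambda>k. \<integral>\<^sup>+x. ennreal ((med3 (hs (a k) x) (hs (b k) x) (hs (c k) x))\<^sup>2) \<partial>M) \<longlonglongrightarrow> 0"
proof -
  have "\<forall>k. \<exists>a b c. P a \<and> P b \<and> P c \<and>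
      (\<integral>\<^sup>+x. ennreal ((med3 (hs a x) (hs b x) (hs c x))\<^sup>2) \<partial>M) < ennreal (inverse (real (Suc k)))"
    using exists_med3_nn_integral_less[OF assms] by simp
  then obtain a b c where abc: "\<And>k. P (a k) \<and> P (b k) \<and> P (c k)"
    and small: "\<And>k. (\<integral>\<^sup>+x. ennreal ((med3 (hs (a k) x) (hs (b k) x) (hs (c k) x))\<^sup>2) \<partial>M)
      < ennreal (inverse (real (Suc k)))"
    by metis
  have "(\<lambda>k. \<integral>\<^sup>+x. ennreal ((med3 (hs (a k) x) (hs (b k) x) (hs (c k) x))\<^sup>2) \<partial>M) \<longlonglongrightarrow> 0"
  proof (rule tendsto_sandwich[OF _ _ tendsto_const])
    show "eventually (\<lambda>k. (\<integral>\<^sup>+x. ennreal ((med3 (hs (a k) x) (hs (b k) x) (hs (c k) x))\<^sup>2) \<partial>M)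
        \<le> ennreal (inverse (real (Suc k)))) sequentially"
      by (intro always_eventually allI less_imp_le small)
    show "(\<lambda>k. ennreal (inverse (real (Suc k)))) \<longlonglongrightarrow> 0"
      using tendsto_ennrealI[OF LIMSEQ_inverse_real_of_nat] by simp
  qed simp
  with abc show ?thesis by (rule that)
qed

lemma L2_conv_if_nn_integral_tendsto:
  assumes [measurable]: "\<And>k. w k \<in> borel_measurable M" "f \<in> borel_measurable M"
    and lim: "(\<lambda>k. \<integral>\<^sup>+x. ennreal ((w k x - f x)\<^sup>2) \<partial>M) \<longlonglongrightarrow> 0"
  shows "L2_conv M w f"
proof -
  have "integral\<^sup>L M (\<lambda>x. (w k x - f x)\<^sup>2) = enn2real (\<integral>\<^sup>+x. ennreal ((w k x - f x)\<^sup>2) \<partial>M)" for k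
    by (rule integral_eq_nn_integral) auto
  moreover have "(\<lambda>k. enn2real (\<integral>\<^sup>+x. ennreal ((w k x - f x)\<^sup>2) \<partial>M)) \<longlonglongrightarrow> 0"
    using tendsto_enn2real[of _ 0] lim by simp
  ultimately show ?thesis
    by (simp add: L2_conv_def)
qed

lemma E_less_top_if_Ee_less_top:
  assumes Lf: "L2_functional M E" and BD: "first_BD (L2 M) E" and f: "f \<in> L2 M"
    and fin: "Ee M E f < \<infinity>"
  shows "E f < \<infinity>"
proof -
  have [measurable]: "f \<in> borel_measurable M" using f by (simp add: L2_def)
  obtain fs where fs: "\<forall>n. fs n \<in> L0 M" "loc_meas_conv M fs f"
    and "liminf (\<lambda>n. ext_inf M E (fs n)) < \<infinity>"
    using fin f by (auto simp: Ee_def L2_imp_L0 Inf_less_iff)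
  then obtain B where B: "liminf (\<lambda>n. ext_inf M E (fs n)) < B" "B < \<infinity>"
    using dense by blast
  define P where "P n \<longleftrightarrow> ext_inf M E (fs n) < B" for n
  have good: "fs n \<in> L2 M \<and> E (fs n) < B" if "P n" for n
    using that B(2) by (auto simp: P_def ext_inf_def split: if_splits)
  have [measurable]: "fs n \<in> borel_measurable M" for n
    using fs by (simp add: L0_def)
  define hs where "hs n = (\<lambda>x. fs n x - f x)" for n
  have "\<And>n. hs n \<in> borel_measurable M" "loc_meas_conv M hs (\<lambda>x. 0)"
    using fs by (auto simp: hs_def loc_meas_conv_def)
  moreover have "frequently P sequentially"
    unfolding P_def using B(1) by (rule frequently_less_if_Liminf_less)
  moreover have "P n \<Longrightarrow> hs n \<in> L2 M" for n
    using f good unfolding hs_def by (blast intro: L2_diff)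
  ultimately obtain a b c where abc: "\<And>k. P (a k) \<and> P (b k) \<and> P (c k)"
    and lim: "(\<lambda>k. \<integral>\<^sup>+x. ennreal ((med3 (hs (a k) x) (hs (b k) x) (hs (c k) x))\<^sup>2) \<partial>M) \<longlonglongrightarrow> 0"
    by (rule exists_med3_seq_tendsto_zero) (assumption | rule that)+
  define w where "w k x = med3 (fs (a k) x) (fs (b k) x) (fs (c k) x)" for k x
  have wL2: "w k \<in> L2 M" for k
    using abc[of k] good unfolding w_def by (intro L2_med3) auto
  have "L2_conv M w f"
    using lim wL2 by (intro L2_conv_if_nn_integral_tendsto) (auto simp: L2_def w_def hs_def med3_diff)
  then have "E f \<le> liminf (\<lambda>k. E (w k))"
    using Lf wL2 f unfolding L2_functional_def by blast
  also have "\<dots> \<le> 2 * B + 2 * B + B"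
  proof (intro Liminf_le always_eventually allI)
    fix k
    have "E (w k) \<le> 2 * E (fs (a k)) + 2 * E (fs (b k)) + E (fs (c k))"
      using abc[of k] good unfolding w_def by (intro first_BD_med3_le[OF BD]) auto
    also have "\<dots> \<le> 2 * B + 2 * B + B"
      using abc[of k] good by (intro add_mono mult_left_mono) (auto intro: less_imp_le)
    finally show "E (w k) \<le> 2 * B + 2 * B + B" .
  qed simp
  also have "\<dots> < \<infinity>"
    using B(2) by (simp add: ennreal_mult_less_top)
  finally show ?thesis .
qed

lemma E_le_Ee:
  assumes Eex: "Ee_exists M E" and h: "h \<in> L2 M" and fin: "E h < \<infinity>"
  shows "E h \<le> Ee M E h"
proof (rule Ee_greatest)
  show "h \<in> L0 M" using h by (rule L2_imp_L0)
  have [measurable]: "h \<in> borel_measurable M" using h by (simp add: L2_def)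
  fix fs assume fs: "\<forall>n. fs n \<in> L0 M" "loc_meas_conv M fs h"
  have [measurable]: "fs n \<in> borel_measurable M" for n using fs by (simp add: L0_def)
  define gs where "gs n = (if fs n \<in> L2 M \<and> E (fs n) < \<infinity> then fs n else h)" for n
  have "loc_meas_conv M gs h"
    by (rule loc_meas_conv_dominated[OF _ _ _ _ fs(2) fs(2)]) (auto simp: gs_def)
  moreover have "gs n \<in> dom_fun (L2 M) E" for n
    using h fin by (simp add: gs_def dom_fun_def)
  ultimately have "E h \<le> liminf (\<lambda>n. E (gs n))"
    using Eex h fin unfolding Ee_exists_def dom_fun_def by blast
  also have "\<dots> \<le> liminf (\<lambda>n. ext_inf M E (fs n))"
    by (intro Liminf_mono always_eventually allI) (auto simp: gs_def ext_inf_def not_less top_unique)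
  finally show "E h \<le> liminf (\<lambda>n. ext_inf M E (fs n))" .
qed

lemma Ee_eq_E:
  assumes Lf: "L2_functional M E" and BD: "first_BD (L2 M) E" and Eex: "Ee_exists M E"
    and h: "h \<in> L2 M" and fin: "Ee M E h < \<infinity> \<or> E h < \<infinity>"
  shows "Ee M E h = E h"
  using fin E_less_top_if_Ee_less_top[OF Lf BD h] Ee_le_E[OF h] E_le_Ee[OF Eex h]
  by (auto intro: antisym)

lemma dom_fun_Ee_Int_L2:
  assumes "L2_functional M E" "first_BD (L2 M) E" "Ee_exists M E"
  shows "dom_fun (L0 M) (Ee M E) \<inter> L2 M = dom_fun (L2 M) E"
proof -
  have "Ee M E h < \<infinity> \<longleftrightarrow> E h < \<infinity>" if "h \<in> L2 M" for h
    using Ee_eq_E[OF assms that] by metis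
  then show ?thesis by (auto simp: dom_fun_def L2_imp_L0)
qed

lemma tendsto_zero_iff_if_eq_where_finite:
  fixes \<phi> \<psi> :: "'a \<Rightarrow> ennreal"
  assumes "\<And>t. \<phi> t < \<infinity> \<or> \<psi> t < \<infinity> \<Longrightarrow> \<phi> t = \<psi> t"
  shows "(\<phi> \<longlongrightarrow> 0) F \<longleftrightarrow> (\<psi> \<longlongrightarrow> 0) F"
proof -
  have "(\<phi> \<longlongrightarrow> 0) F \<Longrightarrow> (\<psi> \<longlongrightarrow> 0) F" if "\<And>t. \<phi> t < \<infinity> \<or> \<psi> t < \<infinity> \<Longrightarrow> \<phi> t = \<psi> t"
    for \<phi> \<psi> :: "'a \<Rightarrow> ennreal"
  proof -
    assume lim: "(\<phi> \<longlongrightarrow> 0) F"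
    then have "eventually (\<lambda>t. \<phi> t < \<infinity>) F"
      by (rule order_tendstoD(2)) simp
    then have "eventually (\<lambda>t. \<phi> t = \<psi> t) F"
      by eventually_elim (use that in blast)
    with lim show "(\<psi> \<longlongrightarrow> 0) F"
      by (rule Lim_transform_eventually)
  qed
  from this[of \<phi> \<psi>] this[of \<psi> \<phi>] assms show ?thesis by metis
qed

lemma M_set_Ee_Int_L2:
  assumes "L2_functional M E" "first_BD (L2 M) E" "Ee_exists M E"
  shows "M_set (L0 M) (Ee M E) \<inter> L2 M = M_set (L2 M) E"
proof -
  have "((\<lambda>t. Ee M E (\<lambda>x. t * h x)) \<longlongrightarrow> 0) (at_right 0) \<longleftrightarrow> ((\<lambda>t. E (\<lambda>x. t * h x)) \<longlongrightarrow> 0) (at_right 0)"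
    if "h \<in> L2 M" for h
    using Ee_eq_E[OF assms L2_cmult[OF that]] by (intro tendsto_zero_iff_if_eq_where_finite)
  then show ?thesis
    by (auto simp: M_set_def L2_imp_L0)
qed

theorem proposition3p10:
  fixes M :: "'a measure" and E :: "('a \<Rightarrow> real) \<Rightarrow> ennreal"
  assumes "sigma_finite_measure M"
    and "L2_functional M E"
    and "Ee_exists M E"
  shows "(order_preserving_form M E \<longrightarrow>
            dom_fun (L0 M) (Ee M E) \<inter> L2 M = dom_fun (L2 M) E \<and>
            M_set (L0 M) (Ee M E) \<inter> L2 M = M_set (L2 M) E)
       \<and> (order_preserving_form M E \<longrightarrow>
            first_BD (L0 M) (Ee M E) \<and>
            (\<forall>f\<in>M_set (L0 M) (Ee M E). lux (Ee M E) (\<lambda>x. \<bar>f x\<bar>) \<le> lux (Ee M E) f))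
       \<and> (dirichlet_form M E \<longrightarrow>
            second_BD (L0 M) (Ee M E) \<and>
            (\<forall>f\<in>M_set (L0 M) (Ee M E). \<forall>C. normal_contraction C \<longrightarrow>
               lux (Ee M E) (\<lambda>x. C (f x)) \<le> lux (Ee M E) f))"
proof (intro conjI impI ballI allI)
  assume "order_preserving_form M E"
  then have BD: "first_BD (L2 M) E" by (simp add: order_preserving_form_def)
  show "dom_fun (L0 M) (Ee M E) \<inter> L2 M = dom_fun (L2 M) E"
    by (rule dom_fun_Ee_Int_L2[OF assms(2) BD assms(3)])
  show "M_set (L0 M) (Ee M E) \<inter> L2 M = M_set (L2 M) E"
    by (rule M_set_Ee_Int_L2[OF assms(2) BD assms(3)])
next
  assume "order_preserving_form M E"
  then have "operates (L2 M) abs E" by (simp add: order_preserving_form_def first_BD_def)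
  then have op: "operates (L0 M) abs (Ee M E)" by (rule operates_Ee[OF normal_contraction_abs])
  then show "first_BD (L0 M) (Ee M E)" by (simp add: first_BD_def)
  fix f assume "f \<in> M_set (L0 M) (Ee M E)"
  moreover have "(\<lambda>y. \<bar>r * y\<bar> / r) = abs" if "r > 0" for r :: real
    using that by (auto simp: abs_mult)
  ultimately show "lux (Ee M E) (\<lambda>x. \<bar>f x\<bar>) \<le> lux (Ee M E) f"
    using op by (intro lux_Ee_comp_le[OF assms(2)]) auto
next
  assume "dirichlet_form M E"
  then have "operates (L2 M) C E" if "normal_contraction C" for C
    using that by (simp add: dirichlet_form_def second_BD_def)
  then have op: "operates (L0 M) C (Ee M E)" if "normal_contraction C" for C
    using that by (blast intro: operates_Ee)
  then show "second_BD (L0 M) (Ee M E)" by (simp add: second_BD_def)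
  fix f C assume "f \<in> M_set (L0 M) (Ee M E)" "normal_contraction C"
  then show "lux (Ee M E) (\<lambda>x. C (f x)) \<le> lux (Ee M E) f"
    by (intro lux_Ee_comp_le[OF assms(2)] op normal_contraction_rescale)
qed

end
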